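(* Let $A\in\mathbb{C}^{n\times n}$, and fix $A^-\in A\{1\}$ and $A^{GD}\in A\{GD\}$. For $X\in\mathbb{C}^{n\times n}$ the following are equivalent: (i) $X = A^{-}AA^{GD}$; (ii) $XAX =X$, $XA= A^{-}A$, $AX = AA^{GD}$, and $AXA = A$; (iii) $XAX =X$, $XA= A^{-}A$, and $AX = AA^{GD}$; (iv) $A^{-}AX =X$, $XA= A^{-}A$, $AX = AA^{GD}$, and $XAA^{GD} = X$.
   Context: For $A\in\mathbb{C}^{n\times n}$, $ind(A)$ is the smallest nonnegative integer $k$ with $\mathrm{rank}(A^k)=\mathrm{rank}(A^{k+1})$. $A\{1\}$ is the set of matrices $X$ with $AXA=A$. With $k=ind(A)$, $A\{GD\}$ is the set of G-Drazin inverses of $A$: matrices $X$ with $AXA=A$, $XA^{k+1}=A^k$, $A^{k+1}X=A^k$. *)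

theory Defs
  imports "HOL-Analysis.Analysis"
begin

primrec mpow :: "'a::comm_ring_1^'n^'n \<Rightarrow> nat \<Rightarrow> 'a^'n^'n" where
  "mpow A 0 = mat 1"
| "mpow A (Suc k) = A ** mpow A k"

definition ind :: "complex^'n^'n \<Rightarrow> nat" where
  "ind A = (LEAST k. rank (mpow A k) = rank (mpow A (Suc k)))"

definition inner_inverses :: "complex^'n^'n \<Rightarrow> (complex^'n^'n) set" where
  "inner_inverses A = {X. A ** X ** A = A}"

definition GD_inverses :: "complex^'n^'n \<Rightarrow> (complex^'n^'n) set" where
  "GD_inverses A = {X. A ** X ** A = A
      \<and> X ** mpow A (Suc (ind A)) = mpow A (ind A)
      \<and> mpow A (Suc (ind A)) ** X = mpow A (ind A)}"

end

theory Submission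
  imports Defs
begin

text \<open>Only the inner-inverse property \<open>A A\<^sup>G\<^sup>D A = A\<close> of the G-Drazin inverse matters,
so the argument works for any two inner inverses \<open>G\<close>, \<open>H\<close> of a rectangular matrix \<open>A\<close>.
An outer inverse \<open>X\<close> with \<open>X A = G A\<close> and \<open>A X = A H\<close> is forced to be
\<open>X = X A X = G (A X) = G A H\<close>, and conversely \<open>G A H\<close> has these products because
\<open>A H A = A\<close> and \<open>A G A = A\<close>.\<close>

lemma outer_inverse_eq_sandwich:
  fixes A :: "'a::semiring_1^'n^'m" and G H X :: "'a^'m^'n"
  assumes "X ** A ** X = X" "X ** A = G ** A" "A ** X = A ** H"
  shows "X = G ** A ** H"
proof -
  have "X = X ** A ** X" using assms(1) by simp
  also have "\<dots> = G ** (A ** X)" using assms(2) by (simp add: matrix_mul_assoc)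
  also have "\<dots> = G ** A ** H" using assms(3) by (simp add: matrix_mul_assoc)
  finally show ?thesis .
qed

lemma sandwich_of_inner_inverses:
  fixes A :: "'a::semiring_1^'n^'m" and G H :: "'a^'m^'n"
  assumes G: "A ** G ** A = A" and H: "A ** H ** A = A"
  shows "G ** A ** H ** A = G ** A"
    and "A ** (G ** A ** H) = A ** H"
    and "G ** A ** H ** A ** (G ** A ** H) = G ** A ** H"
proof -
  show right: "G ** A ** H ** A = G ** A"
    using H by (simp flip: matrix_mul_assoc)
  show left: "A ** (G ** A ** H) = A ** H"
    using G by (simp add: matrix_mul_assoc)
  have "G ** A ** H ** A ** (G ** A ** H) = G ** (A ** (G ** A ** H))"
    using right by (simp add: matrix_mul_assoc)
  also have "\<dots> = G ** A ** H"
    using left by (simp add: matrix_mul_assoc)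
  finally show "G ** A ** H ** A ** (G ** A ** H) = G ** A ** H" .
qed

lemma inner_inverse_if_right_product_eq:
  fixes A :: "'a::semiring_1^'n^'m" and G X :: "'a^'m^'n"
  assumes "A ** G ** A = A" "X ** A = G ** A"
  shows "A ** X ** A = A"
proof -
  have "A ** X ** A = A ** (G ** A)" using assms(2) by (simp flip: matrix_mul_assoc)
  also have "\<dots> = A" using assms(1) by (simp add: matrix_mul_assoc)
  finally show ?thesis .
qed

lemma outer_inverse_fixed_by_projectors:
  fixes A :: "'a::semiring_1^'n^'m" and G H X :: "'a^'m^'n"
  assumes "X ** A ** X = X" "X ** A = G ** A" "A ** X = A ** H"
  shows "G ** A ** X = X" and "X ** A ** H = X"
proof -
  show "G ** A ** X = X" using assms(1,2) by simp
  have "X ** A ** H = X ** (A ** X)" using assms(3) by (simp add: matrix_mul_assoc)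
  also have "\<dots> = X" using assms(1) by (simp add: matrix_mul_assoc)
  finally show "X ** A ** H = X" .
qed

lemma outer_inverse_if_right_projector_fixes:
  fixes A :: "'a::semiring_1^'n^'m" and H X :: "'a^'m^'n"
  assumes "A ** X = A ** H" "X ** A ** H = X"
  shows "X ** A ** X = X"
proof -
  have "X ** A ** X = X ** (A ** H)" using assms(1) by (simp flip: matrix_mul_assoc)
  also have "\<dots> = X" using assms(2) by (simp add: matrix_mul_assoc)
  finally show ?thesis .
qed

theorem theorem3p8:
  fixes A Am AGD X :: "complex^'n^'n"
  assumes "Am \<in> inner_inverses A"
    and "AGD \<in> GD_inverses A"
  shows "(X = Am ** A ** AGD
          \<longleftrightarrow> (X ** A ** X = X \<and> X ** A = Am ** A \<and> A ** X = A ** AGD \<and> A ** X ** A = A))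
       \<and> ((X ** A ** X = X \<and> X ** A = Am ** A \<and> A ** X = A ** AGD \<and> A ** X ** A = A)
          \<longleftrightarrow> (X ** A ** X = X \<and> X ** A = Am ** A \<and> A ** X = A ** AGD))
       \<and> ((X ** A ** X = X \<and> X ** A = Am ** A \<and> A ** X = A ** AGD)
          \<longleftrightarrow> (Am ** A ** X = X \<and> X ** A = Am ** A \<and> A ** X = A ** AGD \<and> X ** A ** AGD = X))"
proof -
  have Am: "A ** Am ** A = A" using assms(1) by (simp add: inner_inverses_def)
  have AGD: "A ** AGD ** A = A" using assms(2) by (simp add: GD_inverses_def)
  have i_iii: "X = Am ** A ** AGD \<longleftrightarrow>
      X ** A ** X = X \<and> X ** A = Am ** A \<and> A ** X = A ** AGD"
    using sandwich_of_inner_inverses[OF Am AGD] outer_inverse_eq_sandwich[of X A Am AGD]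
    by blast
  have iii_ii: "X ** A = Am ** A \<Longrightarrow> A ** X ** A = A"
    using inner_inverse_if_right_product_eq[OF Am] .
  have iii_iv: "X ** A ** X = X \<and> X ** A = Am ** A \<and> A ** X = A ** AGD \<longleftrightarrow>
      Am ** A ** X = X \<and> X ** A = Am ** A \<and> A ** X = A ** AGD \<and> X ** A ** AGD = X"
    using outer_inverse_fixed_by_projectors[of X A Am AGD]
      outer_inverse_if_right_projector_fixes[of A X AGD]
    by blast
  show ?thesis
    using i_iii iii_ii iii_iv by blast
qed

end
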